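(* Let $n\ge1$, $d\ge1$, $m\ge1$ be integers and $p\in(0,1)$. For integers $d_1,d_2,k$ put $$P(n,d_1,d_2,k,p)=n^{d_2-k}\left(1-p^{d_2}-p^{d_1}+2p^{d_1+d_2-k}\right)^m.$$ Then $$\max_{d_1,d_2,k}P(n,d_1,d_2,k,p)=\max_{0\le w\le d-1}\max\{P(n,d,d,w,p),\,P(n,w,d,w,p)\}=\max_{0\le w\le d-1}\max\left\{n^{d-w}(1-2p^d+2p^{2d-w})^m,\ n^{d-w}(1+p^d-p^w)^m\right\},$$ where the maximum on the left is over all integers $d_1,d_2,k$ with $0\le d_1,d_2\le d$ and $0\le k\le\min(d_1,d_2)$, excluding the triples with $d_1=d_2=k$, and $w$ ranges over integers. *)

theory Defs
  imports Complex_Main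
begin

definition Pfun :: "nat \<Rightarrow> nat \<Rightarrow> nat \<Rightarrow> nat \<Rightarrow> nat \<Rightarrow> real \<Rightarrow> real" where
  "Pfun m n d1 d2 k p = real n ^ (d2 - k) * (1 - p ^ d2 - p ^ d1 + 2 * p ^ (d1 + d2 - k)) ^ m"

end

theory Submission
  imports Defs
begin

text \<open>Put \<open>j = d2 - k\<close>. If \<open>j \<ge> 1\<close>, then with \<open>y = p^j\<close>, \<open>x = p^d1\<close>, \<open>a = p^k\<close> the base of
  \<open>P(n,d1,d2,k,p)\<close> is \<open>1 - a y - x + 2 x y\<close>, which is affine in \<open>x\<close> and decreasing in \<open>a\<close>.
  Moving \<open>x\<close> to the end of its range favoured by the sign of \<open>2y - 1\<close> and then lowering \<open>a\<close> to
  \<open>p^w\<close>, \<open>w = d - j\<close>, does not decrease it and yields \<open>P(n,d,d,w,p)\<close> or \<open>P(n,w,d,w,p)\<close>, which carry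
  the same factor \<open>n^j\<close>. If \<open>j = 0\<close>, then \<open>k < d1\<close> and \<open>P = (1 - p^k + p^d1)^m\<close>, which is dominated
  by \<open>P(n,d-1,d,d-1,p) = n (1 + p^d - p^(d-1))^m\<close> because \<open>p^k - p^d1 \<ge> p^k (1 - p)\<close>.\<close>

lemma Max_eq_Max_of_dominating_subset:
  fixes S T :: "'a::linorder set"
  assumes "finite S" "T \<subseteq> S" "T \<noteq> {}" and dom: "\<And>x. x \<in> S \<Longrightarrow> \<exists>t\<in>T. x \<le> t"
  shows "Max S = Max T"
proof (rule antisym)
  have "finite T" using assms(1,2) by (rule finite_subset[rotated])
  show "Max S \<le> Max T"
  proof (rule Max.boundedI)
    fix x assume "x \<in> S"
    then obtain t where "t \<in> T" "x \<le> t" using dom by blast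
    with \<open>finite T\<close> show "x \<le> Max T" by (meson Max_ge order_trans)
  qed (use assms in auto)
  show "Max T \<le> Max S" using Max_mono[OF assms(2,3,1)] .
qed

lemma Pfun_base_nonneg:
  fixes p :: real
  assumes "0 < p" "p < 1" "k \<le> min a b"
  shows "0 \<le> 1 - p ^ b - p ^ a + 2 * p ^ (a + b - k)"
proof -
  have "p ^ a * p ^ b \<le> p ^ (a + b - k)"
    unfolding power_add[symmetric] using assms by (intro power_decreasing) auto
  moreover have "0 \<le> (1 - p ^ a) * (1 - p ^ b)" "0 \<le> p ^ a * p ^ b"
    using assms by (simp_all add: power_le_one)
  ultimately show ?thesis by (simp add: algebra_simps)
qed

lemma Pfun_diagonal:
  assumes "w \<le> d"
  shows "Pfun m n d d w p = real n ^ (d - w) * (1 - 2 * p ^ d + 2 * p ^ (2 * d - w)) ^ m"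
proof -
  have "d + d - w = 2 * d - w" "1 - p ^ d - p ^ d = 1 - 2 * p ^ d" by simp_all
  then show ?thesis by (simp only: Pfun_def)
qed

lemma Pfun_left_shifted:
  assumes "w \<le> d"
  shows "Pfun m n w d w p = real n ^ (d - w) * (1 + p ^ d - p ^ w) ^ m"
proof -
  have "w + d - w = d" "1 - p ^ d - p ^ w + 2 * p ^ d = 1 + p ^ d - p ^ w" by simp_all
  then show ?thesis by (simp only: Pfun_def)
qed

lemma affine_le_endpoint_values:
  fixes a x y z :: real
  assumes "0 \<le> y" "y \<le> 1" "0 \<le> z" "z \<le> a" "z * y \<le> x" "x \<le> a"
  shows "1 - a * y - x + 2 * x * y \<le> 1 - 2 * (z * y) + 2 * (z * y * y)
       \<or> 1 - a * y - x + 2 * x * y \<le> 1 - z * y - z + 2 * (z * y)"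
proof (cases "2 * y \<le> 1")
  case True
  have "z * y * (1 - 2 * y) \<le> x * (1 - 2 * y)" "z * y \<le> a * y"
    using True assms by (auto intro: mult_right_mono)
  then show ?thesis by (simp add: algebra_simps)
next
  case False
  have "x * (2 * y - 1) \<le> a * (2 * y - 1)" "z * (1 - y) \<le> a * (1 - y)"
    using False assms by (auto intro: mult_right_mono)
  then show ?thesis by (simp add: algebra_simps)
qed

lemma Pfun_le_candidates_if_k_less_d2:
  fixes p :: real
  assumes "0 < p" "p < 1" "d1 \<le> d" "d2 \<le> d" "k \<le> min d1 d2" "k < d2"
  defines "w \<equiv> d - (d2 - k)"
  shows "Pfun m n d1 d2 k p \<le> Pfun m n d d w p \<or> Pfun m n d1 d2 k p \<le> Pfun m n w d w p"
proof -
  define j where "j = d2 - k"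
  have d2_eq: "d2 = k + j" and d_eq: "d = w + j" and "k \<le> w" and "j = d - w"
    using assms unfolding w_def j_def by auto
  let ?a = "p ^ k" and ?x = "p ^ d1" and ?y = "p ^ j" and ?z = "p ^ w"
  have base: "1 - p ^ d2 - p ^ d1 + 2 * p ^ (d1 + d2 - k) = 1 - ?a * ?y - ?x + 2 * ?x * ?y"
    and base_dd: "1 - p ^ d - p ^ d + 2 * p ^ (d + d - w) = 1 - 2 * (?z * ?y) + 2 * (?z * ?y * ?y)"
    and base_wd: "1 - p ^ d - p ^ w + 2 * p ^ (w + d - w) = 1 - ?z * ?y - ?z + 2 * (?z * ?y)"
    unfolding d2_eq d_eq by (simp_all add: power_add algebra_simps)
  have "0 \<le> 1 - ?a * ?y - ?x + 2 * ?x * ?y"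
    using Pfun_base_nonneg[OF assms(1,2,5)] base by simp
  then have mono: "real n ^ j * (1 - ?a * ?y - ?x + 2 * ?x * ?y) ^ m \<le> real n ^ j * v ^ m"
    if "1 - ?a * ?y - ?x + 2 * ?x * ?y \<le> v" for v
    using that by (intro mult_left_mono power_mono) auto
  have "?z * ?y \<le> ?x"
    unfolding power_add[symmetric] d_eq[symmetric] using assms by (intro power_decreasing) auto
  moreover have "?z \<le> ?a" "?x \<le> ?a" using assms \<open>k \<le> w\<close> by (auto intro: power_decreasing)
  ultimately have "1 - ?a * ?y - ?x + 2 * ?x * ?y \<le> 1 - 2 * (?z * ?y) + 2 * (?z * ?y * ?y)
       \<or> 1 - ?a * ?y - ?x + 2 * ?x * ?y \<le> 1 - ?z * ?y - ?z + 2 * (?z * ?y)"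
    using assms by (intro affine_le_endpoint_values) (auto intro: power_le_one)
  then show ?thesis
    unfolding Pfun_def base base_dd base_wd j_def[symmetric] \<open>j = d - w\<close>[symmetric]
    using mono by blast
qed

lemma Pfun_le_candidate_if_k_eq_d2:
  fixes p :: real
  assumes "0 < p" "p < 1" "1 \<le> n" "k < d1" "d1 \<le> d"
  shows "Pfun m n d1 k k p \<le> Pfun m n (d - 1) d (d - 1) p"
proof -
  have "d = Suc (d - 1)" using assms by simp
  then have pd: "p ^ d = p * p ^ (d - 1)" by (metis power_Suc)
  have "p ^ d1 \<le> p ^ Suc k" "p ^ (d - 1) \<le> p ^ k"
    using assms by (intro power_decreasing; simp)+
  moreover have "(1 - p) * p ^ (d - 1) \<le> (1 - p) * p ^ k"
    using \<open>p ^ (d - 1) \<le> p ^ k\<close> assms by (intro mult_left_mono) auto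
  ultimately have base_le: "1 - p ^ k + p ^ d1 \<le> 1 + p ^ d - p ^ (d - 1)"
    unfolding pd by (simp add: algebra_simps)
  have "0 \<le> 1 - p ^ k + p ^ d1" using assms by (simp add: power_le_one)
  have "d1 + k - k = d1" "1 - p ^ k - p ^ d1 + 2 * p ^ d1 = 1 - p ^ k + p ^ d1" by simp_all
  then have "Pfun m n d1 k k p = (1 - p ^ k + p ^ d1) ^ m" by (simp only: Pfun_def) simp
  also have "\<dots> \<le> 1 * (1 + p ^ d - p ^ (d - 1)) ^ m"
    using base_le \<open>0 \<le> 1 - p ^ k + p ^ d1\<close> by (simp add: power_mono)
  also have "\<dots> \<le> real n * (1 + p ^ d - p ^ (d - 1)) ^ m"
    using assms base_le \<open>0 \<le> 1 - p ^ k + p ^ d1\<close> by (intro mult_right_mono) auto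
  also have "\<dots> = Pfun m n (d - 1) d (d - 1) p"
    using Pfun_left_shifted[of "d - 1" d m n p] \<open>d = Suc (d - 1)\<close> by simp
  finally show ?thesis .
qed

lemma Pfun_dominated_by_candidates:
  fixes p :: real
  assumes "0 < p" "p < 1" "1 \<le> n"
    and d: "d1 \<le> d" "d2 \<le> d" "k \<le> min d1 d2" "\<not> (d1 = d2 \<and> d2 = k)"
  shows "\<exists>t\<in>(\<lambda>w. max (Pfun m n d d w p) (Pfun m n w d w p)) ` {0..d-1}. Pfun m n d1 d2 k p \<le> t"
proof (cases "k < d2")
  case True
  then have "d - (d2 - k) \<in> {0..d-1}" using d by auto
  then show ?thesis
    using Pfun_le_candidates_if_k_less_d2[OF assms(1,2) d(1-3) True, of m n]
    by (intro bexI[OF _ imageI]) (auto simp: le_max_iff_disj)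
next
  case False
  then have "k < d1" "d2 = k" using d by auto
  then show ?thesis
    using Pfun_le_candidate_if_k_eq_d2[OF assms(1-3) \<open>k < d1\<close> d(1), of m]
    by (intro bexI[OF _ imageI]) (auto simp: le_max_iff_disj)
qed

theorem lemma2:
  fixes n d m :: nat and p :: real
  assumes "n \<ge> 1" and "d \<ge> 1" and "m \<ge> 1" and "0 < p" and "p < 1"
  shows "Max {Pfun m n d1 d2 k p | d1 d2 k. d1 \<le> d \<and> d2 \<le> d \<and> k \<le> min d1 d2
                \<and> \<not> (d1 = d2 \<and> d2 = k)}
           = Max ((\<lambda>w. max (Pfun m n d d w p) (Pfun m n w d w p)) ` {0..d-1})
       \<and> Max ((\<lambda>w. max (Pfun m n d d w p) (Pfun m n w d w p)) ` {0..d-1})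
           = Max ((\<lambda>w. max (real n ^ (d - w) * (1 - 2 * p ^ d + 2 * p ^ (2 * d - w)) ^ m)
                            (real n ^ (d - w) * (1 + p ^ d - p ^ w) ^ m)) ` {0..d-1})"
proof
  let ?S = "{Pfun m n d1 d2 k p | d1 d2 k. d1 \<le> d \<and> d2 \<le> d \<and> k \<le> min d1 d2
                \<and> \<not> (d1 = d2 \<and> d2 = k)}"
  let ?T = "(\<lambda>w. max (Pfun m n d d w p) (Pfun m n w d w p)) ` {0..d-1}"
  have "?S \<subseteq> (\<lambda>(d1, d2, k). Pfun m n d1 d2 k p) ` ({..d} \<times> {..d} \<times> {..d})"
    by (force simp: image_iff)
  then have "finite ?S" by (rule finite_subset) simp
  moreover have "?T \<subseteq> ?S"
  proof
    fix x assume "x \<in> ?T"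
    then obtain w where "w \<in> {0..d-1}" and "x = max (Pfun m n d d w p) (Pfun m n w d w p)"
      by blast
    then have "w < d" "x \<in> {Pfun m n d d w p, Pfun m n w d w p}"
      using assms by (auto simp: max_def)
    then show "x \<in> ?S" by fastforce
  qed
  moreover have "\<exists>t\<in>?T. x \<le> t" if "x \<in> ?S" for x
    using that Pfun_dominated_by_candidates[OF assms(4,5,1)] by blast
  ultimately show "Max ?S = Max ?T" by (intro Max_eq_Max_of_dominating_subset) auto
next
  show "Max ((\<lambda>w. max (Pfun m n d d w p) (Pfun m n w d w p)) ` {0..d-1})
      = Max ((\<lambda>w. max (real n ^ (d - w) * (1 - 2 * p ^ d + 2 * p ^ (2 * d - w)) ^ m)
                       (real n ^ (d - w) * (1 + p ^ d - p ^ w) ^ m)) ` {0..d-1})"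
    by (intro arg_cong[where f = Max] image_cong) (auto simp: Pfun_diagonal Pfun_left_shifted)
qed

end
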